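(* Let $D_*=\{(y_1,y_2)\in\mathbb{R}^2:y_2>0\}$, let $W$ be a planar Brownian motion, let $x\in D_*$ and let $c_1<\infty$. For each $\delta>0$ let $X^\delta$ be any process constructed as in the context. Then $X^\delta$ converges in distribution to reflected Brownian motion in $D_*$ (starting from $x$) as $\delta\to0$.
   Context: Reflected Brownian motion in $D_*$ driven by $W$ and started from $z$ at time $s$ is the unique continuous process $Z$ with values in $\overline{D_*}$ solving the Skorohod equation $Z_t=z+(W_t-W_s)+\int_s^t \mathbf{n}\,dL_u$, $t\ge s$, where $\mathbf{n}=(0,1)$ is the inward unit normal and $L$ is a nondecreasing continuous process with $L_s=0$ that increases only when $Z\in\partial D_*$. Construction of $X^\delta$ for fixed $\delta>0$: let $X^{\delta,1}$ be reflected Brownian motion in $D_*$ driven by $W$ starting from $x$ at time $T_0=0$; let $T_1\ge T_0$ be a stopping time with $X^{\delta,1}_{T_1}\in\partial D_*$ a.s., and $V_1$ a random variable with $|V_1|\le c_1\delta^2$ a.s. Inductively, given $X^{\delta,j}$, a stopping time $T_j\ge T_{j-1}$ for $X^{\delta,j}$ with $X^{\delta,j}_{T_j}\in\partial D_*$ a.s., and a random variable $V_j$ with $|V_j|\le c_1\delta^2$ a.s., define $\{X^{\delta,j+1}_t,t\ge T_j\}$ to be reflected Brownian motion in $D_*$ driven by $\{W_t,t\ge T_j\}$ starting at time $T_j$ from the point $X^{\delta,j}_{T_j}+(V_j,\delta)$; then choose any $X^{\delta,j+1}$-stopping time $T_{j+1}\ge T_j$ with $X^{\delta,j+1}_{T_{j+1}}\in\partial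 D_*$ a.s. and a random variable $V_{j+1}$ with $|V_{j+1}|\le c_1\delta^2$ a.s. Set $X^\delta_t=X^{\delta,j}_t$ for $t\in[T_{j-1},T_j)$ (one has $T_j\to\infty$ a.s., so $X^\delta$ is defined for all $t\ge0$). *)

theory Defs
  imports "HOL-Probability.Probability"
begin

definition Dstar :: "(real \<times> real) set" where
  "Dstar = {y. snd y > 0}"

definition Dstar_bdry :: "(real \<times> real) set" where
  "Dstar_bdry = {y. snd y = 0}"

definition planar_BM :: "'w measure \<Rightarrow> (real \<Rightarrow> 'w measure) \<Rightarrow> (real \<Rightarrow> 'w \<Rightarrow> real \<times> real) \<Rightarrow> bool" where
  "planar_BM M Fil W \<longleftrightarrow>
     prob_space M \<and> filtration (space M) Fil \<and> (\<forall>t. sets (Fil t) \<subseteq> sets M) \<and>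
     (\<forall>t. W t \<in> borel_measurable (Fil t)) \<and>
     (AE \<omega> in M. W 0 \<omega> = 0) \<and>
     (AE \<omega> in M. continuous_on UNIV (\<lambda>t. W t \<omega>)) \<and>
     (\<forall>s t. 0 \<le> s \<and> s < t \<longrightarrow>
        distributed M lborel (\<lambda>\<omega>. W t \<omega> - W s \<omega>)
          (\<lambda>z. ennreal (normal_density 0 (sqrt (t - s)) (fst z) * normal_density 0 (sqrt (t - s)) (snd z))) \<and>
        (\<forall>A \<in> sets (Fil s). \<forall>B \<in> sets (borel :: (real \<times> real) measure).
           measure M (A \<inter> {\<omega> \<in> space M. W t \<omega> - W s \<omega> \<in> B})
             = measure M A * measure M {\<omega> \<in> space M. W t \<omega> - W s \<omega> \<in> B}))"

text \<open>Pathwise Skorohod equation: the path Z is the reflected Brownian motion in D_* driven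
  by the path w, started from z at time s: Z_t = z + (w_t - w_s) + (0, L_t) for t >= s,
  Z continuous with values in the closure of D_*, L continuous nondecreasing with L_s = 0,
  and L increases only when Z is on the boundary (L is constant on every interval
  [a,b] subset of [s,oo) on which Z stays in D_*).\<close>

definition RBM_path :: "(real \<Rightarrow> real \<times> real) \<Rightarrow> real \<Rightarrow> real \<times> real \<Rightarrow> (real \<Rightarrow> real \<times> real) \<Rightarrow> bool" where
  "RBM_path w s z Z \<longleftrightarrow>
     (\<exists>L :: real \<Rightarrow> real.
        continuous_on {s..} Z \<and> (\<forall>t\<ge>s. Z t \<in> closure Dstar) \<and>
        continuous_on {s..} L \<and> L s = 0 \<and> mono_on {s..} L \<and>
        (\<forall>t\<ge>s. Z t = z + (w t - w s) + (0, L t)) \<and>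
        (\<forall>a b. s \<le> a \<and> a \<le> b \<and> (\<forall>u\<in>{a..b}. Z u \<in> Dstar) \<longrightarrow> L a = L b))"

text \<open>X is a process X^delta constructed as in the paper, for the given delta and c1:
  Xj j (j >= 1) are the pieces X^{delta,j}, T j (j >= 0) the stopping times with T 0 = 0,
  V j (j >= 1) the horizontal displacements.\<close>

definition constructed_process ::
  "'w measure \<Rightarrow> (real \<Rightarrow> 'w measure) \<Rightarrow> (real \<Rightarrow> 'w \<Rightarrow> real \<times> real) \<Rightarrow> real \<times> real \<Rightarrow> real \<Rightarrow> real
     \<Rightarrow> (real \<Rightarrow> 'w \<Rightarrow> real \<times> real) \<Rightarrow> bool" where
  "constructed_process M Fil W x c1 \<delta> X \<longleftrightarrow>
     (\<exists>(Xj :: nat \<Rightarrow> real \<Rightarrow> 'w \<Rightarrow> real \<times> real) (T :: nat \<Rightarrow> 'w \<Rightarrow> real) (V :: nat \<Rightarrow> 'w \<Rightarrow> real).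
        (\<forall>\<omega>\<in>space M. T 0 \<omega> = 0) \<and>
        (\<forall>j. stopping_time Fil (T j)) \<and>
        (\<forall>j. \<forall>\<omega>\<in>space M. T j \<omega> \<le> T (Suc j) \<omega>) \<and>
        (\<forall>j\<ge>1. \<forall>t. Xj j t \<in> borel_measurable M) \<and>
        (\<forall>j\<ge>1. V j \<in> borel_measurable M \<and> (\<forall>\<omega>\<in>space M. \<bar>V j \<omega>\<bar> \<le> c1 * \<delta>\<^sup>2)) \<and>
        (AE \<omega> in M. RBM_path (\<lambda>t. W t \<omega>) 0 x (\<lambda>t. Xj 1 t \<omega>)) \<and>
        (\<forall>j\<ge>1. AE \<omega> in M. Xj j (T j \<omega>) \<omega> \<in> Dstar_bdry) \<and>
        (\<forall>j\<ge>1. AE \<omega> in M.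
           RBM_path (\<lambda>t. W t \<omega>) (T j \<omega>) (Xj j (T j \<omega>) \<omega> + (V j \<omega>, \<delta>)) (\<lambda>t. Xj (Suc j) t \<omega>)) \<and>
        (\<forall>j\<ge>1. \<forall>\<omega>\<in>space M. \<forall>t. T (j - 1) \<omega> \<le> t \<and> t < T j \<omega> \<longrightarrow> X t \<omega> = Xj j t \<omega>) \<and>
        (\<forall>t. X t \<in> borel_measurable M))"

definition cadlag :: "(real \<Rightarrow> real \<times> real) \<Rightarrow> bool" where
  "cadlag f \<longleftrightarrow> (\<forall>t\<ge>0. continuous (at_right t) f) \<and> (\<forall>t>0. \<exists>l. (f \<longlongrightarrow> l) (at_left t))"

definition skorokhod_conv :: "(nat \<Rightarrow> real \<Rightarrow> real \<times> real) \<Rightarrow> (real \<Rightarrow> real \<times> real) \<Rightarrow> bool" where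
  "skorokhod_conv xs x \<longleftrightarrow>
     (\<exists>lam :: nat \<Rightarrow> real \<Rightarrow> real.
        (\<forall>n. strict_mono_on {0..} (lam n) \<and> continuous_on {0..} (lam n) \<and> lam n ` {0..} = {0..}) \<and>
        (\<forall>T>0. \<forall>\<epsilon>>0. eventually (\<lambda>n. \<forall>t\<in>{0..T}. \<bar>lam n t - t\<bar> < \<epsilon> \<and> norm (xs n (lam n t) - x t) < \<epsilon>) sequentially))"

definition J1_test_functional :: "((real \<Rightarrow> real \<times> real) \<Rightarrow> real) \<Rightarrow> bool" where
  "J1_test_functional F \<longleftrightarrow>
     F \<in> borel_measurable (Pi\<^sub>M UNIV (\<lambda>_. borel)) \<and>
     (\<exists>B. \<forall>f. \<bar>F f\<bar> \<le> B) \<and>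
     (\<forall>xs x. (\<forall>n. cadlag (xs n)) \<and> cadlag x \<and> skorokhod_conv xs x \<longrightarrow>
        (\<lambda>n. F (xs n)) \<longlonglongrightarrow> F x)"

definition conv_in_distribution ::
  "'w measure \<Rightarrow> (real \<Rightarrow> real \<Rightarrow> 'w \<Rightarrow> real \<times> real) \<Rightarrow> (real \<Rightarrow> 'w \<Rightarrow> real \<times> real) \<Rightarrow> bool" where
  "conv_in_distribution M Xd Z \<longleftrightarrow>
     (\<forall>F. J1_test_functional F \<longrightarrow>
        ((\<lambda>\<delta>. integral\<^sup>L M (\<lambda>\<omega>. F (\<lambda>t. Xd \<delta> t \<omega>))) \<longlongrightarrow> integral\<^sup>L M (\<lambda>\<omega>. F (\<lambda>t. Z t \<omega>))) (at_right 0))"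

end

theory Submission
  imports Defs
begin

text \<open>The estimate is pathwise, so the Brownian hypothesis is only needed for the probability
  space. Fix a path and let g be the height of the unreflected path x + (w t - w 0). The height of
  Z is g + A, where A t is the largest of 0 and of -g on [0, t] (Skorokhod's formula). The
  k-th piece of X^\<delta> is g + A k, where A k is given by the same formula on [T k, t] started
  from the value of A (k - 1) at T k plus \<delta>. By induction on k, A lies between A k and
  A k - \<delta>. Each kick adds \<delta> to the height, so after k kicks k \<delta> \<le> A t + \<delta>. This bounds the
  horizontal drift, the sum of k displacements of size at most c1 \<delta>^2, by c1 \<delta> (A t + \<delta>),
  and it also forces T k \<rightarrow> \<infinity>. Hence X^\<delta> \<rightarrow> Z locally uniformly for almost every path, so also
  in the Skorokhod topology, and dominated convergence finishes the proof.\<close>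

section \<open>One-dimensional Skorokhod problem\<close>

text \<open>A is the cumulative upward push in the one-dimensional Skorokhod problem for the free
  path g from time s. Unlike the local time L of the paper, A need not vanish at s.\<close>

definition skorokhod_push :: "(real \<Rightarrow> real) \<Rightarrow> real \<Rightarrow> (real \<Rightarrow> real) \<Rightarrow> bool" where
  "skorokhod_push g s A \<longleftrightarrow>
     continuous_on {s..} (\<lambda>t. g t + A t) \<and> continuous_on {s..} A \<and> mono_on {s..} A \<and>
     (\<forall>t\<ge>s. 0 \<le> g t + A t) \<and>
     (\<forall>a b. s \<le> a \<and> a \<le> b \<and> (\<forall>u\<in>{a..b}. 0 < g u + A u) \<longrightarrow> A a = A b)"

lemma skorokhod_pushD:
  assumes "skorokhod_push g s A"
  shows "continuous_on {s..} (\<lambda>t. g t + A t)" and "continuous_on {s..} A" and "mono_on {s..} A"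
    and "s \<le> t \<Longrightarrow> 0 \<le> g t + A t"
    and "s \<le> a \<Longrightarrow> a \<le> b \<Longrightarrow> \<forall>u\<in>{a..b}. 0 < g u + A u \<Longrightarrow> A a = A b"
  using assms unfolding skorokhod_push_def by blast+

lemma skorokhod_push_mono:
  "skorokhod_push g s A \<Longrightarrow> s \<le> a \<Longrightarrow> a \<le> t \<Longrightarrow> A a \<le> A t"
  using skorokhod_pushD(3) by (fastforce intro: mono_onD)

lemma skorokhod_push_ge_neg:
  assumes "skorokhod_push g s A" "s \<le> u" "u \<le> t"
  shows "- g u \<le> A t"
proof -
  have "0 \<le> g u + A u" using skorokhod_pushD(4)[OF assms(1,2)] .
  with skorokhod_push_mono[OF assms] show ?thesis by linarith
qed

text \<open>With skorokhod_push_mono and skorokhod_push_ge_neg this is Skorokhod's formula: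
  A t is the maximum of A s and of -g on [s, t].\<close>

lemma skorokhod_push_attained:
  assumes push: "skorokhod_push g s A" and "s \<le> t"
  shows "A t = A s \<or> (\<exists>u\<in>{s..t}. A t = - g u)"
proof -
  note nonneg = skorokhod_pushD(4)[OF push]
  have flat: "A a = A t" if "s \<le> a" "a \<le> t" "\<forall>v\<in>{a..t}. 0 < g v + A v" for a
    using skorokhod_pushD(5)[OF push] that .
  define zeros where "zeros = {v \<in> {s..t}. g v + A v = 0}"
  show ?thesis
  proof (cases "zeros = {}")
    case True
    have "\<forall>v\<in>{s..t}. 0 < g v + A v"
    proof
      fix v assume "v \<in> {s..t}"
      with True have "g v + A v \<noteq> 0" by (auto simp: zeros_def)
      with nonneg[of v] \<open>v \<in> {s..t}\<close> show "0 < g v + A v" by simp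
    qed
    then have "A s = A t" using \<open>s \<le> t\<close> by (intro flat) auto
    then show ?thesis by simp
  next
    case False
    have "closed zeros"
      unfolding zeros_def
      by (intro continuous_closed_preimage_constant continuous_on_subset[OF skorokhod_pushD(1)[OF push]])
         auto
    moreover have bdd: "bdd_above zeros"
      unfolding zeros_def by (auto intro: bdd_aboveI[of _ t])
    ultimately have "Sup zeros \<in> zeros"
      using False by (intro closed_contains_Sup)
    txt \<open>A is constant after the last zero u of g + A before t.\<close>
    then obtain u where u: "u = Sup zeros" "s \<le> u" "u \<le> t" "g u + A u = 0"
      by (auto simp: zeros_def)
    have after_u: "A a = A t" if "u < a" "a \<le> t" for a
    proof (rule flat)
      show "\<forall>v\<in>{a..t}. 0 < g v + A v"
      proof
        fix v assume v: "v \<in> {a..t}"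
        have "v \<notin> zeros"
        proof
          assume "v \<in> zeros"
          then have "v \<le> u" unfolding u(1) by (rule cSup_upper[OF _ bdd])
          with v that show False by simp
        qed
        moreover have "s \<le> v" "v \<le> t" using v u that by auto
        ultimately have "g v + A v \<noteq> 0" by (simp add: zeros_def)
        with nonneg[OF \<open>s \<le> v\<close>] show "0 < g v + A v" by simp
      qed
    qed (use u that in auto)
    have "A u = A t"
    proof (cases "u = t")
      case False
      then have "u < t" using u by simp
      have "(A \<longlongrightarrow> A u) (at u within {u..t})"
      proof (rule tendsto_within_subset)
        show "(A \<longlongrightarrow> A u) (at u within {s..})"
          using skorokhod_pushD(2)[OF push] u unfolding continuous_on_def by simp
      qed (use u in auto)
      then have "(A \<longlongrightarrow> A u) (at_right u)"
        using at_within_Icc_at_right[OF \<open>u < t\<close>] by simp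
      moreover have "eventually (\<lambda>a. A a = A t) (at_right u)"
        unfolding eventually_at_right_field using \<open>u < t\<close> after_u less_imp_le by blast
      ultimately have "((\<lambda>_. A t) \<longlongrightarrow> A u) (at_right u)"
        by (rule Lim_transform_eventually)
      then show ?thesis by (simp add: tendsto_const_iff)
    qed simp
    then have "A t = - g u" using u(4) by simp
    with u(2,3) show ?thesis by auto
  qed
qed

lemma kicked_push_ge_reflected:
  fixes g AZ :: "real \<Rightarrow> real" and A :: "nat \<Rightarrow> real \<Rightarrow> real" and T :: "nat \<Rightarrow> real"
  assumes Z: "skorokhod_push g (T 0) AZ"
    and pushes: "\<And>k. skorokhod_push g (T k) (A k)"
    and start: "A 0 (T 0) = AZ (T 0)"
    and T_mono: "\<And>k. T k \<le> T (Suc k)"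
    and kick: "\<And>k. A (Suc k) (T (Suc k)) = A k (T (Suc k)) + \<delta>"
    and "0 \<le> \<delta>" and "T k \<le> t"
  shows "AZ t \<le> A k t"
  using \<open>T k \<le> t\<close>
proof (induction k arbitrary: t)
  case 0
  from skorokhod_push_attained[OF Z 0] show ?case
  proof
    assume "AZ t = AZ (T 0)"
    then show ?thesis using skorokhod_push_mono[OF pushes order_refl 0] start by simp
  next
    assume "\<exists>u\<in>{T 0..t}. AZ t = - g u"
    then show ?thesis using skorokhod_push_ge_neg[OF pushes] by fastforce
  qed
next
  case (Suc k)
  have "T 0 \<le> T (Suc k)" using lift_Suc_mono_le[of T, OF T_mono] by simp
  have "AZ (T (Suc k)) \<le> A k (T (Suc k))" using Suc.IH T_mono .
  also have "\<dots> \<le> A (Suc k) t"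
    using kick[of k] skorokhod_push_mono[OF pushes order_refl Suc.prems] \<open>0 \<le> \<delta>\<close> by simp
  finally have before: "AZ (T (Suc k)) \<le> A (Suc k) t" .
  have "T 0 \<le> t" using \<open>T 0 \<le> T (Suc k)\<close> Suc.prems by simp
  from skorokhod_push_attained[OF Z this] show ?case
  proof (elim disjE bexE)
    assume "AZ t = AZ (T 0)"
    with skorokhod_push_mono[OF Z order_refl \<open>T 0 \<le> T (Suc k)\<close>] before show ?thesis by simp
  next
    fix u assume u: "u \<in> {T 0..t}" "AZ t = - g u"
    show ?thesis
    proof (cases "u \<le> T (Suc k)")
      case True
      with skorokhod_push_ge_neg[OF Z, of u "T (Suc k)"] u before show ?thesis by simp
    next
      case False
      with skorokhod_push_ge_neg[OF pushes, of "Suc k" u t] u show ?thesis by simp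
    qed
  qed
qed

lemma kicked_push_le_reflected:
  fixes g AZ :: "real \<Rightarrow> real" and A :: "nat \<Rightarrow> real \<Rightarrow> real" and T :: "nat \<Rightarrow> real"
  assumes Z: "skorokhod_push g (T 0) AZ"
    and pushes: "\<And>k. skorokhod_push g (T k) (A k)"
    and start: "A 0 (T 0) = AZ (T 0)"
    and T_mono: "\<And>k. T k \<le> T (Suc k)"
    and hits: "\<And>k. g (T (Suc k)) + A k (T (Suc k)) = 0"
    and kick: "\<And>k. A (Suc k) (T (Suc k)) = A k (T (Suc k)) + \<delta>"
    and "0 \<le> \<delta>" and "T k \<le> t"
  shows "A k t \<le> AZ t + \<delta>"
proof -
  have "T 0 \<le> T k" using lift_Suc_mono_le[of T, OF T_mono] by simp
  from skorokhod_push_attained[OF pushes \<open>T k \<le> t\<close>] show ?thesis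
  proof (elim disjE bexE)
    assume at_start: "A k t = A k (T k)"
    show ?thesis
    proof (cases k)
      case 0
      with at_start start skorokhod_push_mono[OF Z order_refl, of t] \<open>T k \<le> t\<close> \<open>0 \<le> \<delta>\<close>
      show ?thesis by simp
    next
      case (Suc j)
      with at_start kick[of j] hits[of j] skorokhod_push_ge_neg[OF Z \<open>T 0 \<le> T k\<close> \<open>T k \<le> t\<close>]
      show ?thesis by simp
    qed
  next
    fix u assume "u \<in> {T k..t}" "A k t = - g u"
    with skorokhod_push_ge_neg[OF Z, of u t] \<open>T 0 \<le> T k\<close> \<open>0 \<le> \<delta>\<close> show ?thesis by simp
  qed
qed

lemma kicked_push_ge_kicks:
  fixes g :: "real \<Rightarrow> real" and A :: "nat \<Rightarrow> real \<Rightarrow> real" and T :: "nat \<Rightarrow> real"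
  assumes pushes: "\<And>k. skorokhod_push g (T k) (A k)"
    and T_mono: "\<And>k. T k \<le> T (Suc k)"
    and kick: "\<And>k. A (Suc k) (T (Suc k)) = A k (T (Suc k)) + \<delta>"
    and "T k \<le> t"
  shows "A 0 (T 0) + real k * \<delta> \<le> A k t"
  using \<open>T k \<le> t\<close>
proof (induction k arbitrary: t)
  case 0
  then show ?case using skorokhod_push_mono[OF pushes order_refl] by simp
next
  case (Suc k)
  have "A 0 (T 0) + real k * \<delta> \<le> A k (T (Suc k))" using Suc.IH T_mono .
  also have "\<dots> + \<delta> \<le> A (Suc k) t"
    using kick[of k] skorokhod_push_mono[OF pushes order_refl Suc.prems] by simp
  finally show ?case by (simp add: algebra_simps)
qed

section \<open>Reflected paths in the half-plane\<close>

lemma closure_Dstar_subset: "closure Dstar \<subseteq> {y. 0 \<le> snd y}"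
proof (rule closure_minimal)
  show "Dstar \<subseteq> {y. 0 \<le> snd y}" by (auto simp: Dstar_def)
  show "closed {y :: real \<times> real. 0 \<le> snd y}"
    by (rule closed_Collect_le) (auto intro!: continuous_intros)
qed

lemma RBM_path_continuous: "RBM_path w s z Y \<Longrightarrow> continuous_on {s..} Y"
  unfolding RBM_path_def by blast

lemma RBM_path_start: "RBM_path w s z Y \<Longrightarrow> Y s = z"
  unfolding RBM_path_def by (auto simp: zero_prod_def)

lemma RBM_path_fst: "RBM_path w s z Y \<Longrightarrow> s \<le> t \<Longrightarrow> fst (Y t) = fst z + fst (w t - w s)"
  unfolding RBM_path_def by auto

lemma RBM_path_skorokhod_push:
  assumes "RBM_path w s z Y"
  shows "skorokhod_push (\<lambda>t. c + snd (w t)) s (\<lambda>t. snd (Y t) - (c + snd (w t)))"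
proof -
  obtain L where cY: "continuous_on {s..} Y" and inD: "\<forall>t\<ge>s. Y t \<in> closure Dstar"
    and cL: "continuous_on {s..} L" and mL: "mono_on {s..} L"
    and eq: "\<forall>t\<ge>s. Y t = z + (w t - w s) + (0, L t)"
    and flat: "\<forall>a b. s \<le> a \<and> a \<le> b \<and> (\<forall>u\<in>{a..b}. Y u \<in> Dstar) \<longrightarrow> L a = L b"
    using assms unfolding RBM_path_def by blast
  define A where "A t = snd (Y t) - (c + snd (w t))" for t
  have A_eq: "A t = snd z - snd (w s) - c + L t" if "s \<le> t" for t
    using eq that by (simp add: A_def)
  show ?thesis
    unfolding skorokhod_push_def A_def[symmetric]
  proof (intro conjI allI impI)
    show "continuous_on {s..} (\<lambda>t. c + snd (w t) + A t)"
      unfolding A_def by (simp add: continuous_on_snd[OF cY])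
    show "continuous_on {s..} A"
      using continuous_on_cong[OF refl A_eq] cL by (force intro: continuous_intros)
    show "mono_on {s..} A"
      using mL by (auto simp: mono_on_def A_eq)
    show "0 \<le> c + snd (w t) + A t" if "s \<le> t" for t
      using inD that closure_Dstar_subset by (auto simp: A_def)
    show "A a = A b" if "s \<le> a \<and> a \<le> b \<and> (\<forall>u\<in>{a..b}. 0 < c + snd (w u) + A u)" for a b
    proof -
      have "L a = L b" using flat that by (auto simp: A_def Dstar_def)
      with that show ?thesis by (simp add: A_eq)
    qed
  qed
qed

lemma continuous_at_right_if_eq_on:
  fixes f X :: "real \<Rightarrow> 'a::topological_space"
  assumes f: "continuous_on {a..} f" and "a \<le> t" "t < b" and eq: "\<And>y. t \<le> y \<Longrightarrow> y < b \<Longrightarrow> X y = f y"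
  shows "continuous (at_right t) X"
proof -
  have "(f \<longlongrightarrow> f t) (at t within {a..})"
    using f \<open>a \<le> t\<close> unfolding continuous_on_def by simp
  then have "(f \<longlongrightarrow> f t) (at t within {t..b})"
    by (rule tendsto_within_subset) (use \<open>a \<le> t\<close> in auto)
  then have "(f \<longlongrightarrow> X t) (at_right t)"
    using at_within_Icc_at_right[OF \<open>t < b\<close>] eq[of t] \<open>t < b\<close> by simp
  moreover have "eventually (\<lambda>y. f y = X y) (at_right t)"
    unfolding eventually_at_right_field using \<open>t < b\<close> eq by (intro exI[of _ b]) auto
  ultimately show ?thesis
    unfolding continuous_within by (rule Lim_transform_eventually)
qed

lemma left_limit_if_eq_on:
  fixes f X :: "real \<Rightarrow> 'a::topological_space"
  assumes f: "continuous_on {a..} f" and "a < t" and eq: "\<And>y. a < y \<Longrightarrow> y < t \<Longrightarrow> X y = f y"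
  shows "\<exists>l. (X \<longlongrightarrow> l) (at_left t)"
proof -
  have "(f \<longlongrightarrow> f t) (at t within {a..})"
    using f \<open>a < t\<close> unfolding continuous_on_def by simp
  then have "(f \<longlongrightarrow> f t) (at t within {a..t})"
    by (rule tendsto_within_subset) auto
  then have "(f \<longlongrightarrow> f t) (at_left t)"
    using at_within_Icc_at_left[OF \<open>a < t\<close>] by simp
  moreover have "eventually (\<lambda>y. f y = X y) (at_left t)"
    unfolding eventually_at_left_field using \<open>a < t\<close> eq by (intro exI[of _ a]) auto
  ultimately show ?thesis
    using Lim_transform_eventually by blast
qed

lemma cadlag_if_continuous_on:
  assumes "continuous_on {0..} f"
  shows "cadlag f"
  unfolding cadlag_def
proof (intro conjI allI impI)
  show "continuous (at_right t) f" if "0 \<le> t" for t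
    using assms that by (rule continuous_at_right_if_eq_on[where b = "t + 1"]) auto
  show "\<exists>l. (f \<longlongrightarrow> l) (at_left t)" if "0 < t" for t
    using assms that by (rule left_limit_if_eq_on) auto
qed

section \<open>One path of the kicked construction\<close>

locale kicked_reflection =
  fixes w :: "real \<Rightarrow> real \<times> real" and x :: "real \<times> real" and \<delta> c1 :: real
    and T :: "nat \<Rightarrow> real" and V :: "nat \<Rightarrow> real" and Y :: "nat \<Rightarrow> real \<Rightarrow> real \<times> real"
    and X Z :: "real \<Rightarrow> real \<times> real"
  assumes x_pos: "0 < snd x" and delta_pos: "0 < \<delta>"
    and T_0: "T 0 = 0" and T_mono: "\<And>k. T k \<le> T (Suc k)"
    and V_bound: "\<And>j. 1 \<le> j \<Longrightarrow> \<bar>V j\<bar> \<le> c1 * \<delta>\<^sup>2"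
    and first_piece: "RBM_path w 0 x (Y 1)"
    and piece_hits: "\<And>j. 1 \<le> j \<Longrightarrow> Y j (T j) \<in> Dstar_bdry"
    and next_piece: "\<And>j. 1 \<le> j \<Longrightarrow> RBM_path w (T j) (Y j (T j) + (V j, \<delta>)) (Y (Suc j))"
    and X_piece: "\<And>j t. 1 \<le> j \<Longrightarrow> T (j - 1) \<le> t \<Longrightarrow> t < T j \<Longrightarrow> X t = Y j t"
    and Z_reflected: "RBM_path w 0 x Z"
begin

text \<open>Y j is the j-th piece X^{\<delta>,j}, which starts at time T (j - 1); so Y (Suc k) is the
  piece that lives on [T k, T (Suc k)).\<close>

definition free_height :: "real \<Rightarrow> real" where
  "free_height t = snd x - snd (w 0) + snd (w t)"

definition push :: "nat \<Rightarrow> real \<Rightarrow> real" where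
  "push k t = snd (Y (Suc k) t) - free_height t"

definition push_Z :: "real \<Rightarrow> real" where
  "push_Z t = snd (Z t) - free_height t"

lemma T_le: "i \<le> j \<Longrightarrow> T i \<le> T j"
  using lift_Suc_mono_le[of T, OF T_mono] .

lemma T_nonneg: "0 \<le> T k"
  using T_le[of 0 k] T_0 by simp

lemma piece_RBM: "RBM_path w (T k) (if k = 0 then x else Y k (T k) + (V k, \<delta>)) (Y (Suc k))"
  using first_piece by (cases k) (simp_all add: T_0 next_piece One_nat_def)

lemma piece_end_height: "snd (Y (Suc k) (T (Suc k))) = 0"
  using piece_hits[of "Suc k"] by (simp add: Dstar_bdry_def)

lemma piece_start_height: "0 < snd (Y (Suc k) (T k))"
  using RBM_path_start[OF piece_RBM[of k]] x_pos delta_pos piece_hits[of k]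
  by (cases k) (simp_all add: Dstar_bdry_def)

lemma push_skorokhod: "skorokhod_push free_height (T k) (push k)"
  using RBM_path_skorokhod_push[OF piece_RBM, of "snd x - snd (w 0)"]
  unfolding push_def[abs_def] free_height_def[abs_def] .

lemma push_Z_skorokhod: "skorokhod_push free_height (T 0) push_Z"
  using RBM_path_skorokhod_push[OF Z_reflected, of "snd x - snd (w 0)"]
  unfolding push_Z_def[abs_def] free_height_def[abs_def] T_0 .

lemma push_Z_mono: "0 \<le> s \<Longrightarrow> s \<le> t \<Longrightarrow> push_Z s \<le> push_Z t"
  using skorokhod_push_mono[OF push_Z_skorokhod] by (simp add: T_0)

lemma push_0_start: "push 0 (T 0) = 0" and push_Z_start: "push_Z (T 0) = 0"
  using RBM_path_start[OF first_piece] RBM_path_start[OF Z_reflected]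
  by (simp_all add: push_def push_Z_def free_height_def T_0)

lemma push_kick: "push (Suc k) (T (Suc k)) = push k (T (Suc k)) + \<delta>"
  using RBM_path_start[OF piece_RBM[of "Suc k"]] by (simp add: push_def)

lemma push_hits: "free_height (T (Suc k)) + push k (T (Suc k)) = 0"
  using piece_end_height by (simp add: push_def)

lemma push_close:
  assumes "T k \<le> t"
  shows "push_Z t \<le> push k t" and "push k t \<le> push_Z t + \<delta>"
  using kicked_push_ge_reflected[OF push_Z_skorokhod push_skorokhod _ T_mono push_kick _ assms]
    kicked_push_le_reflected[OF push_Z_skorokhod push_skorokhod _ T_mono push_hits push_kick _ assms]
  by (simp_all add: push_0_start push_Z_start less_imp_le[OF delta_pos])

lemma kicks_bounded:
  assumes "T k \<le> t"
  shows "real k * \<delta> \<le> push_Z t + \<delta>"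
  using kicked_push_ge_kicks[OF push_skorokhod T_mono push_kick assms] push_close(2)[OF assms]
  by (simp add: push_0_start)

lemma T_unbounded: "\<exists>k. t < T k"
proof (rule ccontr)
  assume "\<nexists>k. t < T k"
  then have "real k * \<delta> \<le> push_Z t + \<delta>" for k
    using kicks_bounded by (simp add: not_less)
  moreover obtain n where "push_Z t + \<delta> < real n * \<delta>"
    using ex_less_of_nat_mult[OF delta_pos] by blast
  ultimately show False by (meson not_le)
qed

lemma T_strict: "T k < T (Suc k)"
  using piece_start_height[of k] piece_end_height[of k] T_mono[of k]
  by (metis order_less_irrefl order_le_less)

lemma piece_containing:
  assumes "0 \<le> t"
  obtains k where "T k \<le> t" and "t < T (Suc k)"
proof -
  obtain n where "t < T n" using T_unbounded by blast
  moreover have "\<not> t < T 0" using T_0 assms by simp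
  ultimately obtain k where "\<forall>i\<le>k. \<not> t < T i" and "t < T (Suc k)"
    using ex_least_nat_less[of "\<lambda>i. t < T i"] by blast
  then show ?thesis using that[of k] by (simp add: not_less)
qed

lemma X_eq_piece: "T k \<le> t \<Longrightarrow> t < T (Suc k) \<Longrightarrow> X t = Y (Suc k) t"
  using X_piece[of "Suc k" t] by simp

lemma piece_fst: "T k \<le> t \<Longrightarrow> fst (Y (Suc k) t) = fst (Z t) + (\<Sum>i = 1..k. V i)"
proof (induction k arbitrary: t)
  case 0
  then show ?case
    using RBM_path_fst[OF first_piece] RBM_path_fst[OF Z_reflected] T_0 by simp
next
  case (Suc k)
  have "fst (Y (Suc (Suc k)) t) = fst (Y (Suc k) (T (Suc k))) + V (Suc k) + fst (w t - w (T (Suc k)))"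
    using RBM_path_fst[OF piece_RBM[of "Suc k"] Suc.prems] by simp
  also have "fst (Y (Suc k) (T (Suc k))) = fst (Z (T (Suc k))) + (\<Sum>i = 1..k. V i)"
    using Suc.IH T_mono by blast
  finally have "fst (Y (Suc (Suc k)) t) =
      fst (Z (T (Suc k))) + fst (w t - w (T (Suc k))) + (\<Sum>i = 1..Suc k. V i)"
    by simp
  moreover have "fst (Z (T (Suc k))) + fst (w t - w (T (Suc k))) = fst (Z t)"
    using RBM_path_fst[OF Z_reflected] T_nonneg[of "Suc k"] Suc.prems by simp
  ultimately show ?case by simp
qed

lemma c1_nonneg: "0 \<le> c1"
proof -
  have "0 \<le> c1 * \<delta>\<^sup>2"
    using V_bound[OF order_refl] abs_ge_zero order_trans by blast
  then show ?thesis using delta_pos by (simp add: zero_le_mult_iff)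
qed

lemma piece_close:
  assumes "T k \<le> t"
  shows "norm (Y (Suc k) t - Z t) \<le> c1 * \<delta> * (push_Z t + \<delta>) + \<delta>"
proof -
  have "Y (Suc k) t - Z t = ((\<Sum>i = 1..k. V i), push k t - push_Z t)"
    using piece_fst[OF assms] by (simp add: prod_eq_iff push_def push_Z_def)
  then have "norm (Y (Suc k) t - Z t) \<le> \<bar>\<Sum>i = 1..k. V i\<bar> + \<bar>push k t - push_Z t\<bar>"
    using norm_Pair_le by (metis real_norm_def)
  also have "\<bar>push k t - push_Z t\<bar> \<le> \<delta>"
    using push_close[OF assms] by simp
  also have "\<bar>\<Sum>i = 1..k. V i\<bar> \<le> (\<Sum>i = 1..k. \<bar>V i\<bar>)"
    by (rule sum_abs)
  also have "\<dots> \<le> real (card {1..k}) * (c1 * \<delta>\<^sup>2)"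
    by (rule sum_bounded_above) (simp add: V_bound)
  also have "\<dots> = c1 * \<delta> * (real k * \<delta>)"
    by (simp add: power2_eq_square)
  also have "\<dots> \<le> c1 * \<delta> * (push_Z t + \<delta>)"
    using kicks_bounded[OF assms] c1_nonneg delta_pos by (simp add: mult_left_mono)
  finally show ?thesis by simp
qed

lemma X_cadlag: "cadlag X"
  unfolding cadlag_def
proof (intro conjI allI impI)
  fix t :: real assume "0 \<le> t"
  then obtain k where k: "T k \<le> t" "t < T (Suc k)" by (rule piece_containing)
  show "continuous (at_right t) X"
    by (rule continuous_at_right_if_eq_on[OF RBM_path_continuous[OF piece_RBM] k])
       (use k in \<open>auto intro: X_eq_piece\<close>)
next
  fix t :: real assume "0 < t"
  then obtain k where k: "T k \<le> t" "t < T (Suc k)" using piece_containing less_imp_le by blast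
  show "\<exists>l. (X \<longlongrightarrow> l) (at_left t)"
  proof (cases "T k < t")
    case True
    show ?thesis
      by (rule left_limit_if_eq_on[OF RBM_path_continuous[OF piece_RBM] True])
         (use k in \<open>auto intro: X_eq_piece\<close>)
  next
    case False
    with k \<open>0 < t\<close> obtain j where "k = Suc j" and "T (Suc j) = t"
      using T_0 by (cases k) auto
    moreover from this have "T j < t" using T_strict[of j] by simp
    ultimately show ?thesis
      by (intro left_limit_if_eq_on[OF RBM_path_continuous[OF piece_RBM[of j]]])
         (auto intro: X_eq_piece)
  qed
qed

lemma X_close:
  assumes "0 \<le> t" "t \<le> Tm"
  shows "norm (X t - Z t) \<le> c1 * \<delta> * (snd (Z Tm - x - (w Tm - w 0)) + \<delta>) + \<delta>"
proof -
  obtain k where k: "T k \<le> t" "t < T (Suc k)" using assms(1) by (rule piece_containing)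
  have "norm (X t - Z t) \<le> c1 * \<delta> * (push_Z t + \<delta>) + \<delta>"
    using piece_close[OF k(1)] X_eq_piece[OF k] by simp
  also have "\<dots> \<le> c1 * \<delta> * (push_Z Tm + \<delta>) + \<delta>"
    using push_Z_mono[OF assms] c1_nonneg delta_pos by (simp add: mult_left_mono)
  also have "push_Z Tm = snd (Z Tm - x - (w Tm - w 0))"
    by (simp add: push_Z_def free_height_def)
  finally show ?thesis .
qed

end

section \<open>Convergence in distribution\<close>

lemma skorokhod_conv_if_locally_uniform:
  assumes "\<And>Tm \<epsilon>. 0 < Tm \<Longrightarrow> 0 < \<epsilon> \<Longrightarrow>
      eventually (\<lambda>n. \<forall>t\<in>{0..Tm}. norm (xs n t - x t) < \<epsilon>) sequentially"
  shows "skorokhod_conv xs x"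
  unfolding skorokhod_conv_def
proof (intro exI[of _ "\<lambda>n t. t"] conjI allI impI)
  show "strict_mono_on {0..} (\<lambda>t::real. t)" by (simp add: strict_mono_on_def)
  show "continuous_on {0..} (\<lambda>t::real. t)" by (rule continuous_on_id)
  show "(\<lambda>t::real. t) ` {0..} = {0..}" by simp
  show "eventually (\<lambda>n. \<forall>t\<in>{0..Tm}. \<bar>t - t\<bar> < \<epsilon> \<and> norm (xs n t - x t) < \<epsilon>) sequentially"
    if "0 < Tm" "0 < \<epsilon>" for Tm \<epsilon> :: real
    using assms[OF that] by eventually_elim (simp add: \<open>0 < \<epsilon>\<close>)
qed

lemma (in prob_space) J1_test_functional_integral_tendsto:
  assumes F: "J1_test_functional F"
    and Xs_meas: "\<And>n t. Xs n t \<in> borel_measurable M" and Y_meas: "\<And>t. Y t \<in> borel_measurable M"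
    and conv: "AE \<omega> in M. (\<forall>n. cadlag (\<lambda>t. Xs n t \<omega>)) \<and> cadlag (\<lambda>t. Y t \<omega>) \<and>
                 skorokhod_conv (\<lambda>n t. Xs n t \<omega>) (\<lambda>t. Y t \<omega>)"
  shows "(\<lambda>n. \<integral>\<omega>. F (\<lambda>t. Xs n t \<omega>) \<partial>M) \<longlonglongrightarrow> (\<integral>\<omega>. F (\<lambda>t. Y t \<omega>) \<partial>M)"
proof -
  obtain B where F_meas: "F \<in> borel_measurable (Pi\<^sub>M UNIV (\<lambda>_. borel))" and F_bound: "\<And>f. \<bar>F f\<bar> \<le> B"
    and F_cont: "\<And>xs x. (\<forall>n. cadlag (xs n)) \<Longrightarrow> cadlag x \<Longrightarrow> skorokhod_conv xs x \<Longrightarrow>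
                   (\<lambda>n. F (xs n)) \<longlonglongrightarrow> F x"
    using F unfolding J1_test_functional_def by blast
  have F_path_meas: "(\<lambda>\<omega>. F (\<lambda>t. P t \<omega>)) \<in> borel_measurable M"
    if "\<And>t. P t \<in> borel_measurable M" for P
    by (rule measurable_compose[OF measurable_PiM_single' F_meas]) (use that in auto)
  show ?thesis
  proof (rule integral_dominated_convergence[where w = "\<lambda>_. B"])
    show "AE \<omega> in M. (\<lambda>n. F (\<lambda>t. Xs n t \<omega>)) \<longlonglongrightarrow> F (\<lambda>t. Y t \<omega>)"
      using conv by eventually_elim (auto intro: F_cont)
  qed (use F_bound in \<open>auto intro: F_path_meas Xs_meas Y_meas\<close>)
qed

lemma constructed_process_AE_close:
  assumes "x \<in> Dstar" and "0 < \<delta>" and "constructed_process M Fil W x c1 \<delta> X"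
    and "AE \<omega> in M. RBM_path (\<lambda>t. W t \<omega>) 0 x (\<lambda>t. Z t \<omega>)"
  shows "AE \<omega> in M. cadlag (\<lambda>t. X t \<omega>) \<and> (\<forall>t Tm. 0 \<le> t \<longrightarrow> t \<le> Tm \<longrightarrow>
           norm (X t \<omega> - Z t \<omega>) \<le> c1 * \<delta> * (snd (Z Tm \<omega> - x - (W Tm \<omega> - W 0 \<omega>)) + \<delta>) + \<delta>)"
proof -
  obtain Y T V where T_0: "\<forall>\<omega>\<in>space M. T 0 \<omega> = 0"
    and T_mono: "\<forall>j. \<forall>\<omega>\<in>space M. T j \<omega> \<le> T (Suc j) \<omega>"
    and V_bound: "\<forall>j\<ge>1. V j \<in> borel_measurable M \<and> (\<forall>\<omega>\<in>space M. \<bar>V j \<omega>\<bar> \<le> c1 * \<delta>\<^sup>2)"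
    and first_piece: "AE \<omega> in M. RBM_path (\<lambda>t. W t \<omega>) 0 x (\<lambda>t. Y 1 t \<omega>)"
    and piece_hits: "\<forall>j\<ge>1. AE \<omega> in M. Y j (T j \<omega>) \<omega> \<in> Dstar_bdry"
    and next_piece: "\<forall>j\<ge>1. AE \<omega> in M.
           RBM_path (\<lambda>t. W t \<omega>) (T j \<omega>) (Y j (T j \<omega>) \<omega> + (V j \<omega>, \<delta>)) (\<lambda>t. Y (Suc j) t \<omega>)"
    and X_piece: "\<forall>j\<ge>1. \<forall>\<omega>\<in>space M. \<forall>t. T (j - 1) \<omega> \<le> t \<and> t < T j \<omega> \<longrightarrow> X t \<omega> = Y j t \<omega>"
    using assms(3) unfolding constructed_process_def by blast
  have "AE \<omega> in M. \<forall>j\<ge>1. Y j (T j \<omega>) \<omega> \<in> Dstar_bdry"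
    unfolding AE_all_countable using piece_hits by (intro allI AE_impI) auto
  moreover have "AE \<omega> in M. \<forall>j\<ge>1.
      RBM_path (\<lambda>t. W t \<omega>) (T j \<omega>) (Y j (T j \<omega>) \<omega> + (V j \<omega>, \<delta>)) (\<lambda>t. Y (Suc j) t \<omega>)"
    unfolding AE_all_countable using next_piece by (intro allI AE_impI) auto
  ultimately show ?thesis
    using AE_space first_piece assms(4)
  proof eventually_elim
    case (elim \<omega>)
    interpret kicked_reflection "\<lambda>t. W t \<omega>" x \<delta> c1 "\<lambda>j. T j \<omega>" "\<lambda>j. V j \<omega>" "\<lambda>j t. Y j t \<omega>"
      "\<lambda>t. X t \<omega>" "\<lambda>t. Z t \<omega>"
      using elim assms(1,2) T_0 T_mono V_bound X_piece by unfold_locales (auto simp: Dstar_def)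
    show ?case using X_cadlag X_close by blast
  qed
qed

lemma constructed_processes_converge_AE:
  assumes "x \<in> Dstar" and "\<And>\<delta>. 0 < \<delta> \<Longrightarrow> constructed_process M Fil W x c1 \<delta> (Xd \<delta>)"
    and RZ: "AE \<omega> in M. RBM_path (\<lambda>t. W t \<omega>) 0 x (\<lambda>t. Z t \<omega>)"
    and S_pos: "\<And>n. 0 < S n" and "S \<longlonglongrightarrow> 0"
  shows "AE \<omega> in M. (\<forall>n. cadlag (\<lambda>t. Xd (S n) t \<omega>)) \<and> cadlag (\<lambda>t. Z t \<omega>) \<and>
           skorokhod_conv (\<lambda>n t. Xd (S n) t \<omega>) (\<lambda>t. Z t \<omega>)"
proof -
  have "AE \<omega> in M. \<forall>n. cadlag (\<lambda>t. Xd (S n) t \<omega>) \<and> (\<forall>t Tm. 0 \<le> t \<longrightarrow> t \<le> Tm \<longrightarrow>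
      norm (Xd (S n) t \<omega> - Z t \<omega>) \<le> c1 * S n * (snd (Z Tm \<omega> - x - (W Tm \<omega> - W 0 \<omega>)) + S n) + S n)"
    unfolding AE_all_countable
    using constructed_process_AE_close[OF assms(1) S_pos assms(2)[OF S_pos] RZ] by blast
  then show ?thesis
    using RZ
  proof eventually_elim
    case (elim \<omega>)
    have "skorokhod_conv (\<lambda>n t. Xd (S n) t \<omega>) (\<lambda>t. Z t \<omega>)"
    proof (rule skorokhod_conv_if_locally_uniform)
      fix Tm \<epsilon> :: real assume "0 < Tm" "0 < \<epsilon>"
      define C where "C = snd (Z Tm \<omega> - x - (W Tm \<omega> - W 0 \<omega>))"
      have "(\<lambda>n. c1 * S n * (C + S n) + S n) \<longlonglongrightarrow> c1 * 0 * (C + 0) + 0"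
        by (intro tendsto_intros \<open>S \<longlonglongrightarrow> 0\<close>)
      then have "eventually (\<lambda>n. c1 * S n * (C + S n) + S n < \<epsilon>) sequentially"
        using \<open>0 < \<epsilon>\<close> by (intro order_tendstoD(2)) auto
      then show "eventually (\<lambda>n. \<forall>t\<in>{0..Tm}. norm (Xd (S n) t \<omega> - Z t \<omega>) < \<epsilon>) sequentially"
      proof (rule eventually_mono, intro ballI)
        fix n t assume n: "c1 * S n * (C + S n) + S n < \<epsilon>" and "t \<in> {0..Tm}"
        then have "norm (Xd (S n) t \<omega> - Z t \<omega>) \<le> c1 * S n * (C + S n) + S n"
          using elim(1) unfolding C_def by auto
        with n show "norm (Xd (S n) t \<omega> - Z t \<omega>) < \<epsilon>" by simp
      qed
    qed
    with elim cadlag_if_continuous_on[OF RBM_path_continuous] show ?case by blast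
  qed
qed

theorem lemma2p3:
  fixes M :: "'w measure" and Fil :: "real \<Rightarrow> 'w measure"
    and W :: "real \<Rightarrow> 'w \<Rightarrow> real \<times> real"
    and x :: "real \<times> real" and c1 :: real
    and Xd :: "real \<Rightarrow> real \<Rightarrow> 'w \<Rightarrow> real \<times> real"
    and Z :: "real \<Rightarrow> 'w \<Rightarrow> real \<times> real"
  assumes "planar_BM M Fil W"
    and "x \<in> Dstar"
    and "\<And>\<delta>. \<delta> > 0 \<Longrightarrow> constructed_process M Fil W x c1 \<delta> (Xd \<delta>)"
    and "\<And>t. Z t \<in> borel_measurable M"
    and "AE \<omega> in M. RBM_path (\<lambda>t. W t \<omega>) 0 x (\<lambda>t. Z t \<omega>)"
  shows "conv_in_distribution M Xd Z"
  unfolding conv_in_distribution_def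
proof (intro allI impI)
  interpret prob_space M using assms(1) unfolding planar_BM_def by blast
  fix F assume F: "J1_test_functional F"
  show "((\<lambda>\<delta>. \<integral>\<omega>. F (\<lambda>t. Xd \<delta> t \<omega>) \<partial>M) \<longlongrightarrow> (\<integral>\<omega>. F (\<lambda>t. Z t \<omega>) \<partial>M)) (at_right 0)"
  proof (rule tendsto_at_right_sequentially[of 0 1])
    fix S :: "nat \<Rightarrow> real" assume S_pos: "\<And>n. 0 < S n" and "S \<longlonglongrightarrow> 0"
    have "Xd (S n) t \<in> borel_measurable M" for n t
      using assms(3)[OF S_pos] unfolding constructed_process_def by blast
    with F assms(4) show "(\<lambda>n. \<integral>\<omega>. F (\<lambda>t. Xd (S n) t \<omega>) \<partial>M) \<longlonglongrightarrow> (\<integral>\<omega>. F (\<lambda>t. Z t \<omega>) \<partial>M)"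
      by (intro J1_test_functional_integral_tendsto
          constructed_processes_converge_AE[OF assms(2,3,5) S_pos \<open>S \<longlonglongrightarrow> 0\<close>])
  qed simp
qed

end
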